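(* Let $H$ be an oriented graph on $h$ vertices that is not $2$-colorable. Then the graph $K(H)$ contains a cycle $c_1c_2\dots c_\ell c_1$ of length $\ell\ge3$ with the following property: for any labeling of the vertices of $H$ by $1,\dots,h$ with corresponding backedge graph $G$, and for every order-preserving homomorphism $f:G\to K(H)$, there are vertices $u_1\in f^{-1}(c_1),\dots,u_\ell\in f^{-1}(c_\ell)$ such that $u_1u_2\dots u_\ell u_1$ is a cycle in $G$.
   Context: An oriented graph is $2$-colorable if its vertex set can be partitioned into $2$ sets each inducing an acyclic digraph. Graphs are undirected with vertex sets that are subsets of $\mathbb{N}$; subgraphs inherit labels. Given a labeling of $V(H)$ by $1,\dots,h$, the backedge graph of $H$ is the undirected graph on $[h]$ with $\{i,j\}$ an edge iff $i<j$ and $j\to i$ in $H$. An order-preserving homomorphism from $G$ to $G'$ is a map $f:V(G)\to V(G')$ with $f(i)\le f(j)$ whenever $i\le j$ and mapping edges to edges; an order-preserving isomorphism is one that is also a graph isomorphism. The ordered core of $G$ is a subgraph of $G$ with the fewest vertices among subgraphs to which $G$ has an order-preserving homomorphism. Let $\mathcal{C}(H)$ be the set of ordered cores of the backedge graphs of $H$ over all $h!$ labelings of $V(H)$ by $1,\dots,h$. $K(H)$ denotes a fixed element of $\mathcal{C}(H)$ such that for every $C\in\mathcal{C}(H)$, if there is an order-preserving homomorphism from $C$ to $K(H)$ then there is an order-preserving isomorphism between $C$ and $K(H)$. *)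

theory Defs
  imports Main
begin

definition oriented_graph :: "'a set \<Rightarrow> ('a \<times> 'a) set \<Rightarrow> bool" where
  "oriented_graph V A \<longleftrightarrow> finite V \<and> A \<subseteq> V \<times> V \<and> (\<forall>u v. (u, v) \<in> A \<longrightarrow> (v, u) \<notin> A)"

definition two_colorable :: "'a set \<Rightarrow> ('a \<times> 'a) set \<Rightarrow> bool" where
  "two_colorable V A \<longleftrightarrow>
     (\<exists>S. S \<subseteq> V \<and> acyclic (A \<inter> (S \<times> S)) \<and> acyclic (A \<inter> ((V - S) \<times> (V - S))))"

type_synonym ugraph = "nat set \<times> nat set set"

definition ugraph :: "ugraph \<Rightarrow> bool" where
  "ugraph G \<longleftrightarrow> finite (fst G) \<and>
     (\<forall>e\<in>snd G. \<exists>i j. e = {i, j} \<and> i \<noteq> j \<and> i \<in> fst G \<and> j \<in> fst G)"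

definition subgraph :: "ugraph \<Rightarrow> ugraph \<Rightarrow> bool" where
  "subgraph C G \<longleftrightarrow> ugraph C \<and> fst C \<subseteq> fst G \<and> snd C \<subseteq> snd G"

definition labeling :: "'a set \<Rightarrow> ('a \<Rightarrow> nat) \<Rightarrow> bool" where
  "labeling V \<sigma> \<longleftrightarrow> bij_betw \<sigma> V {1..card V}"

definition backedge_graph :: "'a set \<Rightarrow> ('a \<times> 'a) set \<Rightarrow> ('a \<Rightarrow> nat) \<Rightarrow> ugraph" where
  "backedge_graph V A \<sigma> =
     ({1..card V}, {{\<sigma> v, \<sigma> u} | u v. (u, v) \<in> A \<and> \<sigma> v < \<sigma> u})"

definition op_hom :: "(nat \<Rightarrow> nat) \<Rightarrow> ugraph \<Rightarrow> ugraph \<Rightarrow> bool" where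
  "op_hom f G G' \<longleftrightarrow>
     (\<forall>i\<in>fst G. f i \<in> fst G') \<and>
     (\<forall>i\<in>fst G. \<forall>j\<in>fst G. i \<le> j \<longrightarrow> f i \<le> f j) \<and>
     (\<forall>i j. {i, j} \<in> snd G \<longrightarrow> {f i, f j} \<in> snd G')"

definition op_iso :: "(nat \<Rightarrow> nat) \<Rightarrow> ugraph \<Rightarrow> ugraph \<Rightarrow> bool" where
  "op_iso f G G' \<longleftrightarrow> op_hom f G G' \<and> bij_betw f (fst G) (fst G') \<and>
     (\<forall>i\<in>fst G. \<forall>j\<in>fst G. {f i, f j} \<in> snd G' \<longrightarrow> {i, j} \<in> snd G)"

definition ordered_core :: "ugraph \<Rightarrow> ugraph \<Rightarrow> bool" where
  "ordered_core G C \<longleftrightarrow> subgraph C G \<and> (\<exists>f. op_hom f G C) \<and>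
     (\<forall>C'. subgraph C' G \<and> (\<exists>f. op_hom f G C') \<longrightarrow> card (fst C) \<le> card (fst C'))"

definition core_set :: "'a set \<Rightarrow> ('a \<times> 'a) set \<Rightarrow> ugraph set" where
  "core_set V A = {C. \<exists>\<sigma>. labeling V \<sigma> \<and> ordered_core (backedge_graph V A \<sigma>) C}"

definition is_K :: "'a set \<Rightarrow> ('a \<times> 'a) set \<Rightarrow> ugraph \<Rightarrow> bool" where
  "is_K V A K \<longleftrightarrow> K \<in> core_set V A \<and>
     (\<forall>C\<in>core_set V A. (\<exists>f. op_hom f C K) \<longrightarrow> (\<exists>g. op_iso g C K))"

definition is_cycle :: "ugraph \<Rightarrow> nat list \<Rightarrow> bool" where
  "is_cycle G cs \<longleftrightarrow> 3 \<le> length cs \<and> distinct cs \<and> set cs \<subseteq> fst G \<and>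
     (\<forall>i<length cs. {cs ! i, cs ! ((i + 1) mod length cs)} \<in> snd G)"

end

theory Submission
  imports Defs
begin

text \<open>If \<open>K\<close> had no cycle it would be a forest, hence properly 2-colourable as an undirected
  graph. Pulling such a colouring back along the order-preserving retraction of a backedge graph
  onto \<open>K\<close> colours \<open>H\<close> so that every arc inside a colour class goes forward in the labelling;
  then both classes are acyclic and \<open>H\<close> would be 2-colourable.

  For the lifting property, let \<open>f : G \<rightarrow> K\<close> and let \<open>C\<close> be an ordered core of \<open>G\<close>. By the choice
  of \<open>K\<close> there is an order-preserving isomorphism \<open>g : C \<rightarrow> K\<close>, and \<open>f \<circ> g\<inverse>\<close> is an
  order-preserving endomorphism of the ordered core \<open>K\<close>. Ordered cores are rigid, so
  \<open>f \<circ> g\<inverse>\<close> is the identity and \<open>g\<inverse>\<close> carries every cycle of \<open>K\<close> to a cycle of \<open>G\<close> lying over it.\<close>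

lemma ugraph_edge_vertices:
  assumes "ugraph G" "{a, b} \<in> snd G"
  shows "a \<in> fst G" "b \<in> fst G"
  using assms unfolding ugraph_def by (metis doubleton_eq_iff)+

lemma ugraph_no_loop: "ugraph G \<Longrightarrow> {a, a} \<notin> snd G"
  unfolding ugraph_def by (metis doubleton_eq_iff)

lemma backedge_graph_ugraph:
  assumes "oriented_graph V A" "labeling V \<sigma>"
  shows "ugraph (backedge_graph V A \<sigma>)"
proof -
  have "\<sigma> ` V = {1..card V}"
    using assms(2) unfolding labeling_def by (rule bij_betw_imp_surj_on)
  then have "\<sigma> u \<in> {1..card V}" "\<sigma> v \<in> {1..card V}" if "(u, v) \<in> A" for u v
    using assms(1) that unfolding oriented_graph_def by blast+
  then show ?thesis
    unfolding ugraph_def backedge_graph_def by fastforce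
qed

lemma subgraph_trans: "subgraph C G \<Longrightarrow> subgraph G G' \<Longrightarrow> subgraph C G'"
  unfolding subgraph_def by blast

definition induced_subgraph :: "ugraph \<Rightarrow> nat set \<Rightarrow> ugraph" where
  "induced_subgraph G S = (S, {e \<in> snd G. e \<subseteq> S})"

lemma subgraph_induced_subgraph:
  assumes "ugraph G" "S \<subseteq> fst G"
  shows "subgraph (induced_subgraph G S) G"
  using assms finite_subset unfolding subgraph_def ugraph_def induced_subgraph_def by fastforce

lemma op_hom_comp: "op_hom f G1 G2 \<Longrightarrow> op_hom g G2 G3 \<Longrightarrow> op_hom (g \<circ> f) G1 G3"
  unfolding op_hom_def by simp

lemma op_hom_subgraph_source: "op_hom f G K \<Longrightarrow> subgraph C G \<Longrightarrow> op_hom f C K"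
  unfolding op_hom_def subgraph_def by blast

lemma op_hom_subgraph_target: "op_hom f K C \<Longrightarrow> subgraph C G \<Longrightarrow> op_hom f K G"
  unfolding op_hom_def subgraph_def by blast

lemma op_hom_onto_image:
  assumes "op_hom h C K" "ugraph C"
  shows "op_hom h C (induced_subgraph K (h ` fst C))"
  using assms ugraph_edge_vertices[OF assms(2)]
  unfolding op_hom_def induced_subgraph_def by auto

lemma ordered_core_exists:
  assumes "ugraph G"
  shows "\<exists>C. ordered_core G C"
proof -
  define P where "P C \<longleftrightarrow> subgraph C G \<and> (\<exists>f. op_hom f G C)" for C
  have "op_hom id G G"
    unfolding op_hom_def by simp
  then have "P G"
    using assms unfolding P_def subgraph_def by blast
  then obtain C where "P C" "\<forall>C'. P C' \<longrightarrow> card (fst C) \<le> card (fst C')"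
    using ex_has_least_nat[of P G "\<lambda>C. card (fst C)"] by blast
  then show ?thesis
    unfolding ordered_core_def P_def by blast
qed

lemma ordered_core_endo_surj:
  assumes core: "ordered_core G C" and h: "op_hom h C C"
  shows "h ` fst C = fst C"
proof -
  obtain r where r: "op_hom r G C"
    using core unfolding ordered_core_def by blast
  have ugC: "ugraph C" and CG: "subgraph C G"
    using core unfolding ordered_core_def subgraph_def by auto
  have finC: "finite (fst C)"
    using ugC unfolding ugraph_def by blast
  have into: "h ` fst C \<subseteq> fst C"
    using h unfolding op_hom_def by blast
  let ?C' = "induced_subgraph C (h ` fst C)"
  have "subgraph ?C' G"
    using subgraph_trans[OF subgraph_induced_subgraph[OF ugC into] CG] .
  moreover have "op_hom (h \<circ> r) G ?C'"
    using op_hom_comp[OF r op_hom_onto_image[OF h ugC]] .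
  ultimately have "card (fst C) \<le> card (fst ?C')"
    using core unfolding ordered_core_def by blast
  then have "card (fst C) \<le> card (h ` fst C)"
    by (simp add: induced_subgraph_def)
  then show ?thesis
    using card_seteq[OF finC into] by simp
qed

lemma mono_on_endo_surj_id:
  fixes h :: "nat \<Rightarrow> nat"
  assumes fin: "finite S" and surj: "h ` S = S" and mono: "mono_on S h" and "k \<in> S"
  shows "h k = k"
proof (rule ccontr)
  assume "h k \<noteq> k"
  with \<open>k \<in> S\<close> have ex: "\<exists>k. k \<in> S \<and> h k \<noteq> k" by blast
  define m where "m = (LEAST k. k \<in> S \<and> h k \<noteq> k)"
  have mS: "m \<in> S" and hm: "h m \<noteq> m"
    using LeastI_ex[OF ex] unfolding m_def by auto
  have below_fixed: "h j = j" if "j \<in> S" "j < m" for j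
    using not_less_Least that unfolding m_def by blast
  have inj: "inj_on h S"
    using finite_surj_inj[OF fin] surj by simp
  show False
  proof (cases "h m < m")
    case True
    then have "h (h m) = h m"
      using below_fixed mS surj by blast
    then show False
      using inj_onD[OF inj] mS surj hm by blast
  next
    case False
    then have "m < h m"
      using hm by simp
    obtain j where j: "j \<in> S" "h j = m"
      using mS surj by (metis imageE)
    then have "\<not> j < m"
      using below_fixed by fastforce
    then have "h m \<le> h j"
      using mono mS j(1) by (simp add: mono_onD)
    then show False
      using \<open>m < h m\<close> j(2) by simp
  qed
qed

lemma ordered_core_rigid:
  assumes core: "ordered_core G C" and h: "op_hom h C C" and "k \<in> fst C"
  shows "h k = k"
proof (rule mono_on_endo_surj_id)
  show "finite (fst C)"
    using core unfolding ordered_core_def subgraph_def ugraph_def by blast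
  show "h ` fst C = fst C"
    using ordered_core_endo_surj[OF core h] .
  show "mono_on (fst C) h"
    using h unfolding op_hom_def by (simp add: mono_onI)
qed fact

lemma op_iso_inverse_op_hom:
  assumes iso: "op_iso g C K" and ugK: "ugraph K"
  shows "op_hom (inv_into (fst C) g) K C"
proof -
  define e where "e = inv_into (fst C) g"
  have bij: "bij_betw g (fst C) (fst K)" and mono: "\<forall>i\<in>fst C. \<forall>j\<in>fst C. i \<le> j \<longrightarrow> g i \<le> g j"
    and refl: "\<forall>i\<in>fst C. \<forall>j\<in>fst C. {g i, g j} \<in> snd K \<longrightarrow> {i, j} \<in> snd C"
    using iso unfolding op_iso_def op_hom_def by auto
  have eC: "e k \<in> fst C" and ge: "g (e k) = k" if "k \<in> fst K" for k
    using that bij unfolding e_def by (auto simp: bij_betw_def intro: inv_into_into f_inv_into_f)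
  have "e k \<le> e l" if "k \<in> fst K" "l \<in> fst K" "k \<le> l" for k l
  proof (rule ccontr)
    assume "\<not> e k \<le> e l"
    then have "l \<le> k"
      using mono eC ge that by (metis nat_le_linear)
    then show False
      using \<open>\<not> e k \<le> e l\<close> \<open>k \<le> l\<close> by simp
  qed
  moreover have "{e k, e l} \<in> snd C" if "{k, l} \<in> snd K" for k l
    using that refl eC ge ugraph_edge_vertices[OF ugK that] by metis
  ultimately show ?thesis
    using eC unfolding op_hom_def e_def by blast
qed

lemma is_cycle_map:
  assumes cyc: "is_cycle K cs" and e: "op_hom e K G" and inj: "inj_on e (fst K)"
  shows "is_cycle G (map e cs)"
proof -
  have csK: "set cs \<subseteq> fst K" and len: "3 \<le> length cs"
    using cyc unfolding is_cycle_def by auto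
  have "(i + 1) mod length cs < length cs" for i
    using len by (intro mod_less_divisor) linarith
  then show ?thesis
    using cyc e inj_on_subset[OF inj csK] unfolding is_cycle_def op_hom_def
    by (auto simp: distinct_map)
qed

lemma cycle_lifts_along_core_iso:
  assumes core: "ordered_core G0 K" and iso: "op_iso g C K" and CG: "subgraph C G"
    and f: "op_hom f G K" and cyc: "is_cycle K cs"
  shows "\<exists>us. length us = length cs \<and>
           (\<forall>i<length us. us ! i \<in> fst G \<and> f (us ! i) = cs ! i) \<and> is_cycle G us"
proof -
  define e where "e = inv_into (fst C) g"
  have ugK: "ugraph K"
    using core unfolding ordered_core_def subgraph_def by blast
  have eG: "op_hom e K G"
    using op_hom_subgraph_target[OF op_iso_inverse_op_hom[OF iso ugK] CG] unfolding e_def .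
  have fe: "f (e k) = k" if "k \<in> fst K" for k
    using ordered_core_rigid[OF core op_hom_comp[OF eG f] that] by simp
  then have "inj_on e (fst K)"
    by (metis inj_onI)
  then have "is_cycle G (map e cs)"
    using is_cycle_map[OF cyc eG] by blast
  moreover have "cs ! i \<in> fst K" if "i < length cs" for i
    using cyc that unfolding is_cycle_def by auto
  ultimately show ?thesis
    using fe unfolding is_cycle_def by (intro exI[of _ "map e cs"]) auto
qed

definition rel_cycle :: "('a \<Rightarrow> 'a \<Rightarrow> bool) \<Rightarrow> 'a list \<Rightarrow> bool" where
  "rel_cycle R cs \<longleftrightarrow> 3 \<le> length cs \<and> distinct cs \<and> successively R cs \<and> R (last cs) (hd cs)"

lemma rel_cycle_mono: "rel_cycle R cs \<Longrightarrow> (\<And>x y. R x y \<Longrightarrow> S x y) \<Longrightarrow> rel_cycle S cs"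
  unfolding rel_cycle_def using successively_mono by blast

lemma rel_cycle_nth:
  assumes "rel_cycle R cs" "i < length cs"
  shows "R (cs ! i) (cs ! ((i + 1) mod length cs))"
proof (cases "Suc i < length cs")
  case True
  then show ?thesis
    using assms successively_nth unfolding rel_cycle_def by fastforce
next
  case False
  then have "Suc i = length cs"
    using assms(2) by simp
  then have i: "i = length cs - 1" "(i + 1) mod length cs = 0"
    by auto
  moreover have "cs \<noteq> []"
    using assms(1) unfolding rel_cycle_def by auto
  ultimately have "cs ! i = last cs" "cs ! ((i + 1) mod length cs) = hd cs"
    by (simp_all add: last_conv_nth hd_conv_nth)
  then show ?thesis
    using assms(1) unfolding rel_cycle_def by simp
qed

lemma is_cycle_if_rel_cycle:
  assumes "ugraph G" "rel_cycle (\<lambda>i j. {i, j} \<in> snd G) cs"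
  shows "is_cycle G cs"
proof -
  have "cs ! i \<in> fst G" if "i < length cs" for i
    using ugraph_edge_vertices[OF assms(1) rel_cycle_nth[OF assms(2) that]] by simp
  then have "set cs \<subseteq> fst G"
    by (auto simp: in_set_conv_nth)
  then show ?thesis
    using assms(2) rel_cycle_nth unfolding is_cycle_def rel_cycle_def by blast
qed

lemma path_end_neighbour_on_path:
  assumes irrefl: "\<forall>x. \<not> R x x" and no_cycle: "\<nexists>cs. rel_cycle R cs"
    and path: "distinct p" "successively R p" and w: "w \<in> set p" "R (last p) w"
  shows "w = last (butlast p)"
proof -
  obtain xs ys where p: "p = xs @ w # ys"
    using split_list[OF w(1)] by blast
  consider "ys = []" | y where "ys = [y]" | y z zs where "ys = y # z # zs"
    by (metis list.exhaust)
  then show ?thesis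
  proof cases
    case 1
    then show ?thesis
      using irrefl w(2) p by simp
  next
    case 2
    then show ?thesis
      using p by (simp add: butlast_append)
  next
    case 3
    then have "rel_cycle R (w # ys)"
      using path w(2) p unfolding rel_cycle_def by (simp add: successively_append_iff)
    then show ?thesis
      using no_cycle by blast
  qed
qed

lemma finite_rel_without_cycle_has_leaf:
  assumes fin: "finite V" and "V \<noteq> {}" and inV: "\<forall>x y. R x y \<longrightarrow> x \<in> V \<and> y \<in> V"
    and irrefl: "\<forall>x. \<not> R x x" and no_cycle: "\<nexists>cs. rel_cycle R cs"
  shows "\<exists>v\<in>V. \<forall>w w'. R v w \<longrightarrow> R v w' \<longrightarrow> w = w'"
proof -
  define P where "P p \<longleftrightarrow> p \<noteq> [] \<and> distinct p \<and> set p \<subseteq> V \<and> successively R p" for p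
  obtain x where "x \<in> V"
    using \<open>V \<noteq> {}\<close> by blast
  then have "P [x]"
    unfolding P_def by simp
  moreover have "length p < Suc (card V)" if "P p" for p
  proof -
    have "length p = card (set p)"
      using that distinct_card unfolding P_def by metis
    also have "\<dots> \<le> card V"
      using that card_mono[OF fin] unfolding P_def by blast
    finally show ?thesis
      by simp
  qed
  ultimately obtain p where p: "P p" and longest: "\<And>q. P q \<Longrightarrow> length q \<le> length p"
    using ex_has_greatest_nat[of P "[x]" length "Suc (card V)"] by blast
  have last_in: "last p \<in> V"
    using p unfolding P_def by auto
  have "w = last (butlast p)" if w: "R (last p) w" for w
  proof (rule path_end_neighbour_on_path[OF irrefl no_cycle _ _ _ w])
    show "distinct p" "successively R p"
      using p unfolding P_def by auto
    show "w \<in> set p"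
    proof (rule ccontr)
      assume "w \<notin> set p"
      then have "P (p @ [w])"
        using p inV w unfolding P_def by (auto simp: successively_append_iff)
      then show False
        using longest[of "p @ [w]"] by simp
    qed
  qed
  then show ?thesis
    using last_in by blast
qed

lemma symmetric_rel_without_cycle_two_colouring:
  assumes "finite V" "\<forall>x y. R x y \<longrightarrow> x \<in> V \<and> y \<in> V" "\<forall>x. \<not> R x x"
    "\<forall>x y. R x y \<longrightarrow> R y x" "\<nexists>cs. rel_cycle R cs"
  shows "\<exists>c :: 'a \<Rightarrow> bool. \<forall>x y. R x y \<longrightarrow> c x \<noteq> c y"
  using assms
proof (induction "card V" arbitrary: V R rule: less_induct)
  case (less V R)
  show ?case
  proof (cases "V = {}")
    case True
    then show ?thesis
      using less.prems(2) by blast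
  next
    case False
    obtain v where "v \<in> V" and leaf: "\<forall>w w'. R v w \<longrightarrow> R v w' \<longrightarrow> w = w'"
      using finite_rel_without_cycle_has_leaf[OF less.prems(1) False less.prems(2,3,5)] by blast
    define R' where "R' x y \<longleftrightarrow> R x y \<and> x \<noteq> v \<and> y \<noteq> v" for x y
    have "\<exists>c' :: 'a \<Rightarrow> bool. \<forall>x y. R' x y \<longrightarrow> c' x \<noteq> c' y"
    proof (rule less.hyps)
      show "card (V - {v}) < card V"
        using card_Diff1_less[OF less.prems(1) \<open>v \<in> V\<close>] .
      show "\<nexists>cs. rel_cycle R' cs"
        using less.prems(5) rel_cycle_mono[of R' _ R] unfolding R'_def by blast
    qed (use less.prems in \<open>auto simp: R'_def\<close>)
    then obtain c' :: "'a \<Rightarrow> bool" where c': "\<forall>x y. R' x y \<longrightarrow> c' x \<noteq> c' y"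
      by blast
    define c where "c = c'(v := \<not> c' (SOME w. R v w))"
    have at_v: "c v \<noteq> c y" if "R v y" for y
    proof -
      have "(SOME w. R v w) = y"
        using someI[of "R v" y] leaf that by blast
      moreover have "y \<noteq> v"
        using that less.prems(3) by blast
      ultimately show ?thesis
        unfolding c_def by simp
    qed
    have "c x \<noteq> c y" if "R x y" for x y
    proof (cases "x = v \<or> y = v")
      case True
      then show ?thesis
        using at_v that less.prems(4) by metis
    next
      case False
      then show ?thesis
        using that c' unfolding c_def R'_def by simp
    qed
    then show ?thesis
      by blast
  qed
qed

lemma ugraph_two_colouring_if_no_cycle:
  assumes ug: "ugraph G" and "\<nexists>cs. is_cycle G cs"
  shows "\<exists>c :: nat \<Rightarrow> bool. \<forall>i j. {i, j} \<in> snd G \<longrightarrow> c i \<noteq> c j"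
proof (rule symmetric_rel_without_cycle_two_colouring)
  show "finite (fst G)"
    using ug unfolding ugraph_def by blast
  show "\<forall>i j. {i, j} \<in> snd G \<longrightarrow> i \<in> fst G \<and> j \<in> fst G"
    using ugraph_edge_vertices[OF ug] by blast
  show "\<forall>i. {i, i} \<notin> snd G"
    using ugraph_no_loop[OF ug] by blast
  show "\<forall>i j. {i, j} \<in> snd G \<longrightarrow> {j, i} \<in> snd G"
    by (simp add: insert_commute)
  show "\<nexists>cs. rel_cycle (\<lambda>i j. {i, j} \<in> snd G) cs"
    using assms is_cycle_if_rel_cycle by blast
qed

lemma two_colorable_if_backedge_graph_maps_to_two_coloured:
  fixes c :: "nat \<Rightarrow> bool"
  assumes og: "oriented_graph V A" and lab: "labeling V \<sigma>"
    and r: "op_hom r (backedge_graph V A \<sigma>) K"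
    and c: "\<forall>i j. {i, j} \<in> snd K \<longrightarrow> c i \<noteq> c j"
  shows "two_colorable V A"
proof -
  have inj: "inj_on \<sigma> V"
    using lab unfolding labeling_def bij_betw_def by blast
  have forward: "\<sigma> u < \<sigma> v" if uv: "(u, v) \<in> A" and same: "c (r (\<sigma> u)) = c (r (\<sigma> v))" for u v
  proof (rule ccontr)
    assume "\<not> \<sigma> u < \<sigma> v"
    moreover have "u \<in> V" "v \<in> V" "u \<noteq> v"
      using og uv unfolding oriented_graph_def by auto
    then have "\<sigma> u \<noteq> \<sigma> v"
      using inj_onD[OF inj] by blast
    ultimately have "\<sigma> v < \<sigma> u"
      by linarith
    then have "{\<sigma> v, \<sigma> u} \<in> snd (backedge_graph V A \<sigma>)"
      using uv unfolding backedge_graph_def by auto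
    then have "{r (\<sigma> v), r (\<sigma> u)} \<in> snd K"
      using r unfolding op_hom_def by blast
    then show False
      using c same by blast
  qed
  have class_acyclic: "acyclic (A \<inter> (T \<times> T))"
    if "\<And>x y. x \<in> T \<Longrightarrow> y \<in> T \<Longrightarrow> c (r (\<sigma> x)) = c (r (\<sigma> y))" for T
  proof -
    have "acyclic ((A \<inter> (T \<times> T))\<inverse>)"
    proof (rule acyclicI_order[where f = \<sigma>])
      fix a b
      assume "(a, b) \<in> (A \<inter> (T \<times> T))\<inverse>"
      then show "\<sigma> b < \<sigma> a"
        using forward[of b a] that[of b a] by blast
    qed
    then show ?thesis
      by simp
  qed
  define S where "S = {x \<in> V. c (r (\<sigma> x))}"
  have "S \<subseteq> V" "acyclic (A \<inter> (S \<times> S))" "acyclic (A \<inter> ((V - S) \<times> (V - S)))"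
    by (auto simp: S_def intro!: class_acyclic)
  then show ?thesis
    unfolding two_colorable_def by blast
qed

lemma ordered_core_of_non_two_colorable_has_cycle:
  assumes og: "oriented_graph V A" and "\<not> two_colorable V A"
    and lab: "labeling V \<sigma>" and core: "ordered_core (backedge_graph V A \<sigma>) K"
  shows "\<exists>cs. is_cycle K cs"
proof (rule ccontr)
  assume "\<nexists>cs. is_cycle K cs"
  moreover have "ugraph K"
    using core unfolding ordered_core_def subgraph_def by blast
  ultimately obtain c :: "nat \<Rightarrow> bool" where "\<forall>i j. {i, j} \<in> snd K \<longrightarrow> c i \<noteq> c j"
    using ugraph_two_colouring_if_no_cycle by blast
  moreover obtain r where "op_hom r (backedge_graph V A \<sigma>) K"
    using core unfolding ordered_core_def by blast
  ultimately show False
    using two_colorable_if_backedge_graph_maps_to_two_coloured[OF og lab] assms(2) by blast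
qed

theorem corollary4p7:
  fixes V :: "'a set" and A :: "('a \<times> 'a) set" and K :: ugraph
  assumes "oriented_graph V A"
    and "\<not> two_colorable V A"
    and "is_K V A K"
  shows "\<exists>cs. is_cycle K cs \<and>
           (\<forall>\<sigma> f. labeling V \<sigma> \<and> op_hom f (backedge_graph V A \<sigma>) K \<longrightarrow>
              (\<exists>us. length us = length cs \<and>
                    (\<forall>i<length us. us ! i \<in> fst (backedge_graph V A \<sigma>) \<and> f (us ! i) = cs ! i) \<and>
                    is_cycle (backedge_graph V A \<sigma>) us))"
proof -
  obtain \<sigma>0 where "labeling V \<sigma>0" and core: "ordered_core (backedge_graph V A \<sigma>0) K"
    using assms(3) unfolding is_K_def core_set_def by blast
  then obtain cs where cyc: "is_cycle K cs"
    using ordered_core_of_non_two_colorable_has_cycle[OF assms(1,2)] by blast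
  have "\<exists>us. length us = length cs \<and>
          (\<forall>i<length us. us ! i \<in> fst (backedge_graph V A \<sigma>) \<and> f (us ! i) = cs ! i) \<and>
          is_cycle (backedge_graph V A \<sigma>) us"
    if lab: "labeling V \<sigma>" and f: "op_hom f (backedge_graph V A \<sigma>) K" for \<sigma> f
  proof -
    obtain C where C: "ordered_core (backedge_graph V A \<sigma>) C"
      using ordered_core_exists[OF backedge_graph_ugraph[OF assms(1) lab]] by blast
    then have CG: "subgraph C (backedge_graph V A \<sigma>)"
      unfolding ordered_core_def by blast
    obtain g where "op_iso g C K"
      using assms(3) C lab op_hom_subgraph_source[OF f CG] unfolding is_K_def core_set_def by blast
    then show ?thesis
      using cycle_lifts_along_core_iso[OF core _ CG f cyc] by blast
  qed
  with cyc show ?thesis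
    by blast
qed

end
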